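(* Assume (A1)–(A4) and $(RC_+)$. Let $\pi^+:=\mathbf{1}_{R^+}$, $f(x,y):=\log\big((1-\pi^+(x))+\pi^+(x)e^{y-x}\big)$, and let $\nu$ be the invariant probability measure of $\Phi_t$, which is equivalent to $\lambda_2$. Then $\nu(f)=\int_{\mathbb{R}^2}f\,d\nu>0$.
   Context: Setting: $\mu,\sigma:\mathbb{R}\to\mathbb{R}$ measurable, $(\varepsilon_t)_{t\ge1}$ i.i.d., $X_0$ constant, $X_t=X_{t-1}+\mu(X_{t-1})+\sigma(X_{t-1})\varepsilon_t$; $X_{-1}$ arbitrary constant, $\Phi_t=(X_{t-1},X_t)$; $\lambda,\lambda_2$ Lebesgue measure on $\mathbb{R},\mathbb{R}^2$. (A1) $\varepsilon_1$ has a density w.r.t. $\lambda$, bounded and bounded away from $0$ on compacts; (A2) $\mu$ locally bounded, $\sigma$ positive, bounded away from $0$ on compacts, globally bounded; (A3) $\limsup_{|x|\to\infty}|x+\mu(x)|/|x|<1$; (A4) $\mathbb{E}e^{\kappa\varepsilon_1^2}<\infty$ for some $\kappa>0$, $\mathbb{E}\varepsilon_1=0$. $(RC_+)$: $R^+:=\{x:\mu(x)>0\}$ satisfies $\lambda(R^+)>0$. *)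

theory Defs
  imports "HOL-Probability.Probability"
begin

text \<open>Transition kernel of the chain Phi_t = (X_{t-1}, X_t), where
  X_t = X_{t-1} + mu(X_{t-1}) + sigma(X_{t-1}) * eps_t and eps_t has law E.\<close>
definition phi_kernel ::
  "(real \<Rightarrow> real) \<Rightarrow> (real \<Rightarrow> real) \<Rightarrow> real measure \<Rightarrow> real \<times> real \<Rightarrow> (real \<times> real) set \<Rightarrow> ennreal" where
  "phi_kernel \<mu> \<sigma> E z A =
     emeasure E {e \<in> space E. (snd z, snd z + \<mu> (snd z) + \<sigma> (snd z) * e) \<in> A}"

definition phi_invariant ::
  "(real \<Rightarrow> real) \<Rightarrow> (real \<Rightarrow> real) \<Rightarrow> real measure \<Rightarrow> (real \<times> real) measure \<Rightarrow> bool" where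
  "phi_invariant \<mu> \<sigma> E \<nu> \<longleftrightarrow>
     prob_space \<nu> \<and> sets \<nu> = sets (borel :: (real \<times> real) measure) \<and>
     (\<forall>A \<in> sets (borel :: (real \<times> real) measure).
        emeasure \<nu> A = (\<integral>\<^sup>+ z. phi_kernel \<mu> \<sigma> E z A \<partial>\<nu>))"

definition Rplus :: "(real \<Rightarrow> real) \<Rightarrow> real set" where
  "Rplus \<mu> = {x. \<mu> x > 0}"

definition fRC :: "(real \<Rightarrow> real) \<Rightarrow> real \<times> real \<Rightarrow> real" where
  "fRC \<mu> z = ln ((1 - indicator (Rplus \<mu>) (fst z))
                 + indicator (Rplus \<mu>) (fst z) * exp (snd z - fst z))"

end

theory Submission
  imports Defs
begin

(* Write y = X_t and x = X_{t-1}.  Since pi^+ is an indicator, f(x, y) is simply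
   1_{R+}(x) * (y - x): the log-gain of holding the asset exactly when the drift mu(x)
   is positive.

   A measure nu is stationary for a random step
      F(z, e) driven by noise E if distr (nu x E) F = nu (locale stationary_chain).
      Then integrals and masses under nu can be computed after one step, and a
      Foster-Lyapunov drift inequality  E[V(F(z, .))] <= rho V(z) + C  with rho < 1
      forces V to be nu-integrable.
   2. The chain Phi_t.  The invariance hypothesis makes nu stationary for the step
      phi_step; (A3) gives the linear growth bound |y + mu y| <= rho |y| + C and (A4)
      a finite first moment of the noise, so V(z) = |snd z| is a Lyapunov function
      and mu(X_t) is nu-integrable.
   3. The theorem.  One step of the chain turns f into 1_{R+}(y) (mu y + sigma y e);
      the noise is centred, so nu(f) = nu(1_{R+}(y) mu y).  This integrand is
      nonnegative and positive on {y in R+}, which has positive nu-mass because the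
      noise density is positive everywhere and R+ has positive Lebesgue measure. *)

lemma integrable_of_exp_square_moment:
  fixes E :: "real measure" and \<kappa> :: real
  assumes "finite_measure E" and sets_E: "sets E = sets borel" and \<kappa>: "0 < \<kappa>"
    and exp_moment: "(\<integral>\<^sup>+ e. ennreal (exp (\<kappa> * e\<^sup>2)) \<partial>E) < \<infinity>"
  shows "integrable E (\<lambda>e. e)"
proof -
  interpret finite_measure E by fact
  have E_meas: "\<And>N. measurable E N = measurable borel N"
    by (intro measurable_cong_sets refl sets_E)
  have pointwise: "\<bar>e\<bar> \<le> 1 + (1/\<kappa>) * exp (\<kappa> * e\<^sup>2)" for e :: real
  proof -
    have "\<bar>e\<bar> \<le> 1 + e\<^sup>2"
    proof (cases "\<bar>e\<bar> \<le> 1")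
      case False
      then have "\<bar>e\<bar> * 1 \<le> \<bar>e\<bar> * \<bar>e\<bar>" by (intro mult_left_mono) auto
      then show ?thesis by (simp add: power2_eq_square)
    qed (smt (verit) zero_le_power2)
    moreover have "\<kappa> * e\<^sup>2 \<le> exp (\<kappa> * e\<^sup>2)"
      using exp_ge_add_one_self[of "\<kappa> * e\<^sup>2"] by linarith
    then have "e\<^sup>2 \<le> (1/\<kappa>) * exp (\<kappa> * e\<^sup>2)"
      using \<kappa> by (simp add: field_simps)
    ultimately show ?thesis by linarith
  qed
  have "(\<integral>\<^sup>+ e. ennreal (norm e) \<partial>E) \<le> (\<integral>\<^sup>+ e. 1 + ennreal (1/\<kappa>) * ennreal (exp (\<kappa> * e\<^sup>2)) \<partial>E)"
  proof (intro nn_integral_mono)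
    fix e :: real
    have "ennreal (norm e) \<le> ennreal (1 + (1/\<kappa>) * exp (\<kappa> * e\<^sup>2))"
      using pointwise[of e] by (intro ennreal_leI) simp
    also have "\<dots> = 1 + ennreal (1/\<kappa>) * ennreal (exp (\<kappa> * e\<^sup>2))"
      using \<kappa> by (simp add: ennreal_mult[symmetric])
    finally show "ennreal (norm e) \<le> 1 + ennreal (1/\<kappa>) * ennreal (exp (\<kappa> * e\<^sup>2))" .
  qed
  also have "\<dots> = emeasure E (space E) + ennreal (1/\<kappa>) * (\<integral>\<^sup>+ e. ennreal (exp (\<kappa> * e\<^sup>2)) \<partial>E)"
    by (subst nn_integral_add) (auto simp: E_meas nn_integral_cmult)
  also have "\<dots> < \<infinity>"
    using exp_moment by (simp add: less_top[symmetric] ennreal_mult_eq_top_iff)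
  finally show ?thesis
    unfolding integrable_iff_bounded by (simp add: E_meas)
qed

(* Assumptions (A2) and (A3) on the drift: the map y |-> y + mu y grows at most
   linearly with a slope rho < 1 (outside a compact set by (A3), on it by (A2)). *)
lemma linear_growth_of_contracting_drift:
  fixes \<mu> :: "real \<Rightarrow> real"
  assumes loc_bdd: "\<And>K. compact K \<Longrightarrow> bounded (\<mu> ` K)"
    and contracting: "Limsup at_infinity (\<lambda>x. ereal (\<bar>x + \<mu> x\<bar> / \<bar>x\<bar>)) < 1"
  obtains \<rho> C where "0 \<le> \<rho>" "\<rho> < 1" "0 \<le> C" "\<And>y. \<bar>y + \<mu> y\<bar> \<le> \<rho> * \<bar>y\<bar> + C"
proof -
  obtain r where r: "Limsup at_infinity (\<lambda>x. ereal (\<bar>x + \<mu> x\<bar> / \<bar>x\<bar>)) < ereal r" "r < 1"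
    using ereal_dense2[OF contracting] by auto
  define \<rho> where "\<rho> = max r (1/2)"
  have \<rho>: "0 \<le> \<rho>" "\<rho> < 1" using r(2) by (auto simp: \<rho>_def)
  have "\<forall>\<^sub>F x in at_infinity. ereal (\<bar>x + \<mu> x\<bar> / \<bar>x\<bar>) < ereal r"
    by (rule Limsup_lessD[OF r(1)])
  then obtain b where b: "\<And>x::real. b \<le> norm x \<Longrightarrow> \<bar>x + \<mu> x\<bar> / \<bar>x\<bar> < r"
    unfolding eventually_at_infinity by auto
  define R where "R = max b 1"
  have "bounded (\<mu> ` cball 0 R)" by (rule loc_bdd) simp
  then obtain M where M: "\<And>x. \<bar>x\<bar> \<le> R \<Longrightarrow> \<bar>\<mu> x\<bar> \<le> M"
    unfolding bounded_iff by fastforce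
  have "\<bar>\<mu> 0\<bar> \<le> M" by (rule M) (simp add: R_def)
  then have M0: "0 \<le> M" by linarith
  show ?thesis
  proof (rule that[OF \<rho>, of "R + M"])
    show "0 \<le> R + M" using M0 by (simp add: R_def)
    fix y :: real
    show "\<bar>y + \<mu> y\<bar> \<le> \<rho> * \<bar>y\<bar> + (R + M)"
    proof (cases "\<bar>y\<bar> \<le> R")
      case True
      then show ?thesis using M[OF True] \<rho>(1) by (smt (verit) mult_nonneg_nonneg abs_ge_zero)
    next
      case False
      then have y: "b \<le> norm y" "0 < \<bar>y\<bar>" by (auto simp: R_def)
      have "\<bar>y + \<mu> y\<bar> < r * \<bar>y\<bar>" using b[OF y(1)] y(2) by (simp add: divide_less_eq)
      moreover have "r * \<bar>y\<bar> \<le> \<rho> * \<bar>y\<bar>" by (intro mult_right_mono) (auto simp: \<rho>_def)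
      ultimately show ?thesis using M0 by (simp add: R_def)
    qed
  qed
qed

lemma emeasure_distr_step:
  assumes "sigma_finite_measure E" and F: "F \<in> M \<Otimes>\<^sub>M E \<rightarrow>\<^sub>M N" and A: "A \<in> sets N"
  shows "emeasure (distr (M \<Otimes>\<^sub>M E) N F) A = (\<integral>\<^sup>+ z. emeasure E {e \<in> space E. F (z, e) \<in> A} \<partial>M)"
proof -
  interpret E: sigma_finite_measure E by fact
  have "emeasure (distr (M \<Otimes>\<^sub>M E) N F) A = emeasure (M \<Otimes>\<^sub>M E) (F -` A \<inter> space (M \<Otimes>\<^sub>M E))"
    using F A by (simp add: emeasure_distr)
  also have "\<dots> = (\<integral>\<^sup>+ z. emeasure E (Pair z -` (F -` A \<inter> space (M \<Otimes>\<^sub>M E))) \<partial>M)"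
    using F A by (intro E.emeasure_pair_measure_alt measurable_sets)
  also have "\<dots> = (\<integral>\<^sup>+ z. emeasure E {e \<in> space E. F (z, e) \<in> A} \<partial>M)"
    by (intro nn_integral_cong arg_cong[where f="emeasure E"]) (auto simp: space_pair_measure)
  finally show ?thesis .
qed

locale stationary_chain = N: prob_space \<nu> + E: prob_space E
  for \<nu> :: "'a measure" and E :: "'b measure" and F :: "'a \<times> 'b \<Rightarrow> 'a" +
  assumes step_measurable[measurable]: "F \<in> \<nu> \<Otimes>\<^sub>M E \<rightarrow>\<^sub>M \<nu>"
    and stationary: "distr (\<nu> \<Otimes>\<^sub>M E) \<nu> F = \<nu>"
begin

sublocale P: pair_prob_space \<nu> E ..

lemma stationary_integral:
  fixes h :: "'a \<Rightarrow> real"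
  assumes h[measurable]: "h \<in> borel_measurable \<nu>" and hF: "integrable (\<nu> \<Otimes>\<^sub>M E) (\<lambda>p. h (F p))"
  shows "integrable \<nu> h" and "(\<integral>z. h z \<partial>\<nu>) = (\<integral>z. (\<integral>e. h (F (z, e)) \<partial>E) \<partial>\<nu>)"
proof -
  show "integrable \<nu> h"
    using integrable_distr_eq[OF step_measurable h] hF by (simp add: stationary)
  have "(\<integral>z. h z \<partial>\<nu>) = (\<integral>p. h (F p) \<partial>(\<nu> \<Otimes>\<^sub>M E))"
    using integral_distr[OF step_measurable h] by (simp add: stationary)
  also have "\<dots> = (\<integral>z. (\<integral>e. h (F (z, e)) \<partial>E) \<partial>\<nu>)"
    using P.integral_fst'[OF hF] by simp
  finally show "(\<integral>z. h z \<partial>\<nu>) = (\<integral>z. (\<integral>e. h (F (z, e)) \<partial>E) \<partial>\<nu>)" .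
qed

lemma emeasure_pos_if_reachable:
  assumes A[measurable]: "A \<in> sets \<nu>"
    and reach: "\<And>z. z \<in> space \<nu> \<Longrightarrow> 0 < emeasure E {e \<in> space E. F (z, e) \<in> A}"
  shows "0 < emeasure \<nu> A"
proof (rule ccontr)
  let ?k = "\<lambda>z. emeasure E {e \<in> space E. F (z, e) \<in> A}"
  assume "\<not> 0 < emeasure \<nu> A"
  then have "(\<integral>\<^sup>+ z. ?k z \<partial>\<nu>) = 0"
    using emeasure_distr_step[OF E.sigma_finite_measure_axioms step_measurable A]
    by (simp add: stationary)
  moreover have "?k \<in> borel_measurable \<nu>" by measurable
  ultimately have "AE z in \<nu>. ?k z = 0" by (simp add: nn_integral_0_iff_AE)
  then have "AE z in \<nu>. False"
    by (rule AE_mp) (rule AE_I2, auto dest: reach)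
  then show False by (simp add: N.AE_False)
qed

(* The drift inequality for V transfers to the truncations min V n, which are
   bounded and hence integrable. *)
lemma truncated_drift:
  fixes V :: "'a \<Rightarrow> real" and \<rho> C :: real and n :: nat
  assumes V_meas[measurable]: "V \<in> borel_measurable \<nu>" and V_nonneg: "\<And>z. 0 \<le> V z"
    and \<rho>: "0 \<le> \<rho>" and C: "0 \<le> C"
    and VF_int: "\<And>z. z \<in> space \<nu> \<Longrightarrow> integrable E (\<lambda>e. V (F (z, e)))"
    and drift: "\<And>z. z \<in> space \<nu> \<Longrightarrow> (\<integral>e. V (F (z, e)) \<partial>E) \<le> \<rho> * V z + C"
  shows "(\<integral>z. min (V z) n \<partial>\<nu>) \<le> (\<integral>z. min (\<rho> * V z + C) n \<partial>\<nu>)"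
proof -
  have trunc_int: "integrable (\<nu> \<Otimes>\<^sub>M E) (\<lambda>p. min (V (F p)) n)"
    by (rule P.integrable_const_bound[where B=n]) (auto simp: V_nonneg)
  have "(\<integral>z. min (V z) n \<partial>\<nu>) = (\<integral>z. (\<integral>e. min (V (F (z, e))) n \<partial>E) \<partial>\<nu>)"
    using stationary_integral(2)[OF _ trunc_int] by simp
  also have "\<dots> \<le> (\<integral>z. min (\<rho> * V z + C) n \<partial>\<nu>)"
  proof (rule integral_mono_AE)
    show "integrable \<nu> (\<lambda>z. \<integral>e. min (V (F (z, e))) n \<partial>E)"
      using P.integrable_fst'[OF trunc_int] by simp
    show "integrable \<nu> (\<lambda>z. min (\<rho> * V z + C) n)"
      by (rule N.integrable_const_bound[where B=n]) (auto simp: V_nonneg \<rho> C)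
    show "AE z in \<nu>. (\<integral>e. min (V (F (z, e))) n \<partial>E) \<le> min (\<rho> * V z + C) n"
    proof (rule AE_I2)
      fix z assume z: "z \<in> space \<nu>"
      have trunc_E: "integrable E (\<lambda>e. min (V (F (z, e))) n)"
        by (rule E.integrable_const_bound[where B=n]) (use z in \<open>auto simp: V_nonneg\<close>)
      have "(\<integral>e. min (V (F (z, e))) n \<partial>E) \<le> (\<integral>e. V (F (z, e)) \<partial>E)"
        by (rule integral_mono[OF trunc_E VF_int[OF z]]) simp
      moreover have "(\<integral>e. min (V (F (z, e))) n \<partial>E) \<le> (\<integral>e. real n \<partial>E)"
        by (rule integral_mono[OF trunc_E]) auto
      ultimately show "(\<integral>e. min (V (F (z, e))) n \<partial>E) \<le> min (\<rho> * V z + C) n"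
        using drift[OF z] by (simp add: E.prob_space)
    qed
  qed
  finally show ?thesis .
qed

(* The functions
   G n = min V n - min (rho V + C) n + C are nonnegative with integral <= C and tend
   to (1 - rho) V, so Fatou's lemma gives  nu((1 - rho) V) <= C. *)
lemma integrable_of_drift:
  fixes V :: "'a \<Rightarrow> real" and \<rho> C :: real
  assumes V_meas[measurable]: "V \<in> borel_measurable \<nu>" and V_nonneg: "\<And>z. 0 \<le> V z"
    and \<rho>: "0 \<le> \<rho>" "\<rho> < 1" and C: "0 \<le> C"
    and VF_int: "\<And>z. z \<in> space \<nu> \<Longrightarrow> integrable E (\<lambda>e. V (F (z, e)))"
    and drift: "\<And>z. z \<in> space \<nu> \<Longrightarrow> (\<integral>e. V (F (z, e)) \<partial>E) \<le> \<rho> * V z + C"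
  shows "integrable \<nu> V"
proof -
  define G where "G n z = min (V z) (real n) - min (\<rho> * V z + C) (real n) + C" for n z
  have trunc_int: "integrable \<nu> (\<lambda>z. min (V z) (real n))"
    and trunc_drift_int: "integrable \<nu> (\<lambda>z. min (\<rho> * V z + C) (real n))" for n
    by (rule N.integrable_const_bound[where B=n]; simp add: V_nonneg \<rho> C)+
  have G_int: "integrable \<nu> (G n)" for n
    unfolding G_def using trunc_int trunc_drift_int by simp
  have G_nonneg: "0 \<le> G n z" for n z
    using mult_left_le_one_le[OF V_nonneg \<rho>(1) less_imp_le[OF \<rho>(2)], of z] C
    by (auto simp: G_def min_def)
  have G_integral: "(\<integral>z. G n z \<partial>\<nu>) \<le> C" for n
  proof -
    have "(\<integral>z. G n z \<partial>\<nu>)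
        = (\<integral>z. min (V z) (real n) \<partial>\<nu>) - (\<integral>z. min (\<rho> * V z + C) (real n) \<partial>\<nu>) + C"
      unfolding G_def using trunc_int trunc_drift_int by (simp add: N.prob_space)
    then show ?thesis
      using truncated_drift[OF V_meas V_nonneg \<rho>(1) C VF_int drift, of n] by simp
  qed
  have G_limit: "liminf (\<lambda>n. ennreal (G n z)) = ennreal ((1 - \<rho>) * V z)" for z
  proof (intro lim_imp_Liminf tendsto_eventually)
    obtain N :: nat where N: "max (V z) (\<rho> * V z + C) \<le> real N" using real_arch_simple by blast
    show "\<forall>\<^sub>F n in sequentially. ennreal (G n z) = ennreal ((1 - \<rho>) * V z)"
      unfolding eventually_sequentially
      by (rule exI[of _ N]) (use N in \<open>auto simp: G_def algebra_simps\<close>)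
  qed simp
  have "(\<integral>\<^sup>+ z. ennreal ((1 - \<rho>) * V z) \<partial>\<nu>) \<le> liminf (\<lambda>n. \<integral>\<^sup>+ z. ennreal (G n z) \<partial>\<nu>)"
    unfolding G_limit[symmetric] by (rule nn_integral_liminf) (simp add: G_def)
  also have "\<dots> \<le> ennreal C"
  proof (rule order_trans[OF Liminf_le_Limsup Limsup_bounded])
    show "\<forall>\<^sub>F n in sequentially. (\<integral>\<^sup>+ z. ennreal (G n z) \<partial>\<nu>) \<le> ennreal C"
      using nn_integral_eq_integral[OF G_int] G_nonneg G_integral
      by (simp add: ennreal_leI)
  qed simp
  finally have bound: "(\<integral>\<^sup>+ z. ennreal ((1 - \<rho>) * V z) \<partial>\<nu>) < \<infinity>"
    by (simp add: le_less_trans)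
  have "(\<integral>\<^sup>+ z. ennreal (norm (V z)) \<partial>\<nu>)
      = ennreal (1 / (1 - \<rho>)) * (\<integral>\<^sup>+ z. ennreal ((1 - \<rho>) * V z) \<partial>\<nu>)"
    using \<rho> V_nonneg
    by (subst nn_integral_cmult[symmetric]) (auto intro!: nn_integral_cong simp: ennreal_mult[symmetric])
  also have "\<dots> < \<infinity>"
    using bound by (simp add: ennreal_mult_less_top)
  finally show ?thesis
    unfolding integrable_iff_bounded by simp
qed

end

definition phi_step :: "(real \<Rightarrow> real) \<Rightarrow> (real \<Rightarrow> real) \<Rightarrow> (real \<times> real) \<times> real \<Rightarrow> real \<times> real" where
  "phi_step \<mu> \<sigma> p = (snd (fst p), snd (fst p) + \<mu> (snd (fst p)) + \<sigma> (snd (fst p)) * snd p)"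

lemma phi_step_Pair [simp]:
  "phi_step \<mu> \<sigma> (z, e) = (snd z, snd z + \<mu> (snd z) + \<sigma> (snd z) * e)"
  by (simp add: phi_step_def)

(* Measurability on Borel sets of the plane reduces to the product sigma-algebra,
   where the measurability prover applies componentwise. *)
lemma measurable_borel_plane:
  assumes "sets M = sets (borel :: (real \<times> real) measure)"
  shows "M \<rightarrow>\<^sub>M N = (borel \<Otimes>\<^sub>M borel :: (real \<times> real) measure) \<rightarrow>\<^sub>M N"
  using assms borel_prod[where 'a=real and 'b=real] by (intro measurable_cong_sets refl) metis

lemma measurable_borel_plane_line:
  assumes "sets M = sets (borel :: (real \<times> real) measure)" and "sets E = sets (borel :: real measure)"
  shows "M \<Otimes>\<^sub>M E \<rightarrow>\<^sub>M N = ((borel \<Otimes>\<^sub>M borel) \<Otimes>\<^sub>M borel :: ((real \<times> real) \<times> real) measure) \<rightarrow>\<^sub>M N"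
  using assms borel_prod[where 'a=real and 'b=real]
  by (intro measurable_cong_sets sets_pair_measure_cong refl) metis+

lemma phi_invariant_stationary_chain:
  fixes \<mu> \<sigma> :: "real \<Rightarrow> real" and E :: "real measure"
  assumes [measurable]: "\<mu> \<in> borel_measurable borel" "\<sigma> \<in> borel_measurable borel"
    and E: "prob_space E" "sets E = sets borel"
    and inv: "phi_invariant \<mu> \<sigma> E \<nu>"
  shows "stationary_chain \<nu> E (phi_step \<mu> \<sigma>)"
proof -
  have \<nu>: "prob_space \<nu>" and sets_\<nu>: "sets \<nu> = sets (borel :: (real \<times> real) measure)"
    and invariance: "\<And>A. A \<in> sets borel \<Longrightarrow> emeasure \<nu> A = (\<integral>\<^sup>+ z. phi_kernel \<mu> \<sigma> E z A \<partial>\<nu>)"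
    using inv unfolding phi_invariant_def by auto
  have step: "phi_step \<mu> \<sigma> \<in> \<nu> \<Otimes>\<^sub>M E \<rightarrow>\<^sub>M \<nu>"
    unfolding measurable_borel_plane_line[OF sets_\<nu> E(2)] measurable_cong_sets[OF refl sets_\<nu>]
      measurable_borel_plane[OF refl] phi_step_def
    by measurable
  have "distr (\<nu> \<Otimes>\<^sub>M E) \<nu> (phi_step \<mu> \<sigma>) = \<nu>"
  proof (rule measure_eqI)
    fix A assume "A \<in> sets (distr (\<nu> \<Otimes>\<^sub>M E) \<nu> (phi_step \<mu> \<sigma>))"
    then show "emeasure (distr (\<nu> \<Otimes>\<^sub>M E) \<nu> (phi_step \<mu> \<sigma>)) A = emeasure \<nu> A"
      using emeasure_distr_step[OF prob_space_imp_sigma_finite[OF E(1)] step] invariance sets_\<nu>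
      by (simp add: phi_kernel_def)
  qed simp
  with \<nu> E(1) step show ?thesis
    unfolding stationary_chain_def stationary_chain_axioms_def by simp
qed

lemma phi_step_abs_drift:
  fixes \<mu> \<sigma> :: "real \<Rightarrow> real" and E :: "real measure"
  assumes "prob_space E" and noise_int: "integrable E (\<lambda>e. e)"
    and growth: "\<And>y. \<bar>y + \<mu> y\<bar> \<le> \<rho> * \<bar>y\<bar> + C" and sigma_bdd: "\<And>y. \<bar>\<sigma> y\<bar> \<le> S"
  shows "integrable E (\<lambda>e. \<bar>snd (phi_step \<mu> \<sigma> (z, e))\<bar>)"
    and "(\<integral>e. \<bar>snd (phi_step \<mu> \<sigma> (z, e))\<bar> \<partial>E) \<le> \<rho> * \<bar>snd z\<bar> + (C + S * (\<integral>e. \<bar>e\<bar> \<partial>E))"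
proof -
  interpret prob_space E by fact
  let ?y = "snd z"
  show int: "integrable E (\<lambda>e. \<bar>snd (phi_step \<mu> \<sigma> (z, e))\<bar>)"
    using noise_int by simp
  have "(\<integral>e. \<bar>snd (phi_step \<mu> \<sigma> (z, e))\<bar> \<partial>E) \<le> (\<integral>e. \<bar>?y + \<mu> ?y\<bar> + S * \<bar>e\<bar> \<partial>E)"
  proof (rule integral_mono[OF int])
    show "integrable E (\<lambda>e. \<bar>?y + \<mu> ?y\<bar> + S * \<bar>e\<bar>)"
      using noise_int by simp
    fix e
    have "\<bar>\<sigma> ?y * e\<bar> \<le> S * \<bar>e\<bar>"
      using sigma_bdd[of ?y] by (simp add: abs_mult mult_right_mono)
    then show "\<bar>snd (phi_step \<mu> \<sigma> (z, e))\<bar> \<le> \<bar>?y + \<mu> ?y\<bar> + S * \<bar>e\<bar>"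
      using abs_triangle_ineq[of "?y + \<mu> ?y" "\<sigma> ?y * e"] by simp
  qed
  also have "\<dots> = \<bar>?y + \<mu> ?y\<bar> + S * (\<integral>e. \<bar>e\<bar> \<partial>E)"
    using noise_int by (simp add: prob_space)
  also have "\<dots> \<le> \<rho> * \<bar>?y\<bar> + (C + S * (\<integral>e. \<bar>e\<bar> \<partial>E))"
    using growth[of ?y] by simp
  finally show "(\<integral>e. \<bar>snd (phi_step \<mu> \<sigma> (z, e))\<bar> \<partial>E) \<le> \<rho> * \<bar>?y\<bar> + (C + S * (\<integral>e. \<bar>e\<bar> \<partial>E))" .
qed

lemma phi_integrable_drift:
  fixes \<mu> \<sigma> :: "real \<Rightarrow> real" and E :: "real measure" and \<nu> :: "(real \<times> real) measure"
  assumes "stationary_chain \<nu> E (phi_step \<mu> \<sigma>)" and sets_\<nu>: "sets \<nu> = sets borel"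
    and [measurable]: "\<mu> \<in> borel_measurable borel"
    and \<rho>: "0 \<le> \<rho>" "\<rho> < 1" and C: "0 \<le> C" and growth: "\<And>y. \<bar>y + \<mu> y\<bar> \<le> \<rho> * \<bar>y\<bar> + C"
    and noise_int: "integrable E (\<lambda>e. e)" and sigma_bdd: "\<And>y. \<bar>\<sigma> y\<bar> \<le> S"
  shows "integrable \<nu> (\<lambda>z. \<mu> (snd z))"
proof -
  interpret stationary_chain \<nu> E "phi_step \<mu> \<sigma>" by fact
  have S: "0 \<le> S" using sigma_bdd[of 0] by linarith
  have abs_snd: "integrable \<nu> (\<lambda>z. \<bar>snd z\<bar>)"
  proof (rule integrable_of_drift[OF _ _ \<rho>])
    show "(\<lambda>z. \<bar>snd z\<bar>) \<in> borel_measurable \<nu>"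
      unfolding measurable_borel_plane[OF sets_\<nu>] by measurable
    show "0 \<le> C + S * (\<integral>e. \<bar>e\<bar> \<partial>E)" using C S by simp
    fix z
    show "integrable E (\<lambda>e. \<bar>snd (phi_step \<mu> \<sigma> (z, e))\<bar>)"
      and "(\<integral>e. \<bar>snd (phi_step \<mu> \<sigma> (z, e))\<bar> \<partial>E) \<le> \<rho> * \<bar>snd z\<bar> + (C + S * (\<integral>e. \<bar>e\<bar> \<partial>E))"
      using phi_step_abs_drift[where \<sigma>=\<sigma>, OF E.prob_space_axioms noise_int growth sigma_bdd] by blast+
  qed simp
  have mu_growth: "norm (\<mu> y) \<le> norm ((1 + \<rho>) * \<bar>y\<bar> + C)" for y
  proof -
    have "\<bar>\<mu> y\<bar> \<le> \<bar>y + \<mu> y\<bar> + \<bar>y\<bar>"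
      using abs_triangle_ineq4[of "y + \<mu> y" y] by simp
    then have "\<bar>\<mu> y\<bar> \<le> (1 + \<rho>) * \<bar>y\<bar> + C"
      using growth[of y] by (simp add: algebra_simps)
    moreover have "0 \<le> (1 + \<rho>) * \<bar>y\<bar> + C"
      using \<rho> C by simp
    ultimately show ?thesis by simp
  qed
  show ?thesis
  proof (rule Bochner_Integration.integrable_bound)
    show "integrable \<nu> (\<lambda>z. (1 + \<rho>) * \<bar>snd z\<bar> + C)" using abs_snd by simp
    show "(\<lambda>z. \<mu> (snd z)) \<in> borel_measurable \<nu>"
      unfolding measurable_borel_plane[OF sets_\<nu>] by measurable
  qed (intro AE_I2 mu_growth)
qed

lemma Rplus_measurable [measurable]:
  assumes [measurable]: "\<mu> \<in> borel_measurable borel"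
  shows "Rplus \<mu> \<in> sets borel"
  unfolding Rplus_def by measurable

lemma fRC_eq: "fRC \<mu> z = indicator (Rplus \<mu>) (fst z) * (snd z - fst z)"
  by (simp add: fRC_def indicator_def)

(* After one step the log-gain is 1_{R+}(y) (mu y + sigma y e); the centred noise
   averages out, leaving the expected drift on R+. *)
lemma phi_integral_fRC:
  fixes \<mu> \<sigma> :: "real \<Rightarrow> real" and E :: "real measure" and \<nu> :: "(real \<times> real) measure"
  assumes "stationary_chain \<nu> E (phi_step \<mu> \<sigma>)"
    and sets_\<nu>: "sets \<nu> = sets borel" and sets_E: "sets E = sets borel"
    and [measurable]: "\<mu> \<in> borel_measurable borel" "\<sigma> \<in> borel_measurable borel"
    and mu_int: "integrable \<nu> (\<lambda>z. \<mu> (snd z))"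
    and noise_int: "integrable E (\<lambda>e. e)" and centred: "(\<integral>e. e \<partial>E) = 0"
    and sigma_bdd: "\<And>y. \<bar>\<sigma> y\<bar> \<le> S"
  shows "integrable \<nu> (fRC \<mu>)"
    and "(\<integral>z. fRC \<mu> z \<partial>\<nu>) = (\<integral>z. indicator (Rplus \<mu>) (snd z) * \<mu> (snd z) \<partial>\<nu>)"
proof -
  interpret stationary_chain \<nu> E "phi_step \<mu> \<sigma>" by fact
  let ?f = "\<lambda>p. indicator (Rplus \<mu>) (snd (fst p)) * (\<mu> (snd (fst p)) + \<sigma> (snd (fst p)) * snd p)"
  have fRC_step: "fRC \<mu> (phi_step \<mu> \<sigma> p) = ?f p" for p
    by (cases p) (simp add: fRC_eq)
  define dom where "dom p = \<bar>\<mu> (snd (fst p))\<bar> + S * \<bar>snd p\<bar>" for p :: "(real \<times> real) \<times> real"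
  have dom_int: "integrable (\<nu> \<Otimes>\<^sub>M E) dom"
  proof (rule P.Fubini_integrable)
    show "dom \<in> borel_measurable (\<nu> \<Otimes>\<^sub>M E)"
      unfolding measurable_borel_plane_line[OF sets_\<nu> sets_E] dom_def by measurable
    have "(\<integral>e. norm (dom (z, e)) \<partial>E) = \<bar>\<mu> (snd z)\<bar> + S * (\<integral>e. \<bar>e\<bar> \<partial>E)" for z
      using noise_int sigma_bdd[of 0] by (simp add: dom_def E.prob_space)
    then show "integrable \<nu> (\<lambda>z. \<integral>e. norm (dom (z, e)) \<partial>E)"
      using mu_int by simp
    show "AE z in \<nu>. integrable E (\<lambda>e. dom (z, e))"
      using noise_int by (simp add: dom_def)
  qed
  have f_int: "integrable (\<nu> \<Otimes>\<^sub>M E) (\<lambda>p. fRC \<mu> (phi_step \<mu> \<sigma> p))"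
    unfolding fRC_step
  proof (rule Bochner_Integration.integrable_bound[OF dom_int])
    show "?f \<in> borel_measurable (\<nu> \<Otimes>\<^sub>M E)"
      unfolding measurable_borel_plane_line[OF sets_\<nu> sets_E] by measurable
    have "norm (?f p) \<le> norm (dom p)" for p
    proof -
      have "\<bar>\<sigma> (snd (fst p)) * snd p\<bar> \<le> S * \<bar>snd p\<bar>"
        using sigma_bdd by (simp add: abs_mult mult_right_mono)
      then show ?thesis
        by (auto simp: dom_def indicator_def)
    qed
    then show "AE p in \<nu> \<Otimes>\<^sub>M E. norm (?f p) \<le> norm (dom p)" by simp
  qed
  have fRC_meas: "fRC \<mu> \<in> borel_measurable \<nu>"
    unfolding fRC_eq[abs_def] measurable_borel_plane[OF sets_\<nu>] by measurable
  show "integrable \<nu> (fRC \<mu>)"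
    by (rule stationary_integral(1)[OF fRC_meas f_int])
  have inner: "(\<integral>e. fRC \<mu> (phi_step \<mu> \<sigma> (z, e)) \<partial>E) = indicator (Rplus \<mu>) (snd z) * \<mu> (snd z)" for z
  proof -
    let ?c = "indicator (Rplus \<mu>) (snd z) :: real"
    have "(\<integral>e. fRC \<mu> (phi_step \<mu> \<sigma> (z, e)) \<partial>E) = (\<integral>e. ?c * \<mu> (snd z) + (?c * \<sigma> (snd z)) * e \<partial>E)"
      unfolding fRC_step by (simp add: algebra_simps)
    also have "\<dots> = ?c * \<mu> (snd z) + (?c * \<sigma> (snd z)) * (\<integral>e. e \<partial>E)"
      using noise_int by (simp add: E.prob_space)
    finally show ?thesis by (simp add: centred)
  qed
  show "(\<integral>z. fRC \<mu> z \<partial>\<nu>) = (\<integral>z. indicator (Rplus \<mu>) (snd z) * \<mu> (snd z) \<partial>\<nu>)"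
    using stationary_integral(2)[OF fRC_meas f_int] unfolding inner .
qed

lemma emeasure_density_affine_preimage_pos:
  fixes g :: "real \<Rightarrow> real" and R :: "real set" and s t :: real
  assumes [measurable]: "g \<in> borel_measurable borel" and g_pos: "\<And>x. 0 < g x"
    and R[measurable]: "R \<in> sets borel" and R_pos: "0 < emeasure lborel R" and s: "s \<noteq> 0"
  shows "0 < emeasure (density lborel (\<lambda>x. ennreal (g x))) {e. t + s * e \<in> R}"
proof (rule ccontr)
  let ?X = "{e. t + s * e \<in> R}"
  assume "\<not> 0 < emeasure (density lborel (\<lambda>x. ennreal (g x))) ?X"
  then have "(\<integral>\<^sup>+ e. ennreal (g e) * indicator ?X e \<partial>lborel) = 0"
    by (simp add: emeasure_density)
  then have "AE e in lborel. ennreal (g e) * indicator ?X e = 0"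
    by (simp add: nn_integral_0_iff_AE)
  then have "AE e in lborel. t + s * e \<notin> R"
    by (rule AE_mp) (rule AE_I2, auto simp: indicator_def ennreal_eq_0_iff not_less[symmetric] g_pos)
  then have "AE x in lborel. t + s * (- t / s + (1 / s) * x) \<notin> R"
    using AE_borel_affine[where c="1 / s" and P="\<lambda>e. t + s * e \<notin> R" and t="- t / s"] s by simp
  then have "AE x in lborel. x \<notin> R"
    using s by (simp add: field_simps)
  then have "emeasure lborel R = 0"
    by (subst (asm) AE_iff_measurable[OF _ refl]) auto
  with R_pos show False by simp
qed

lemma Rplus_snd_measurable:
  fixes \<mu> :: "real \<Rightarrow> real" and \<nu> :: "(real \<times> real) measure"
  assumes sets_\<nu>: "sets \<nu> = sets borel" and [measurable]: "\<mu> \<in> borel_measurable borel"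
  shows "{z. snd z \<in> Rplus \<mu>} \<in> sets \<nu>"
proof -
  have "snd -` Rplus \<mu> \<inter> space (borel \<Otimes>\<^sub>M borel) \<in> sets (borel \<Otimes>\<^sub>M borel :: (real \<times> real) measure)"
    by (rule measurable_sets[OF measurable_snd]) simp
  then have "{z. snd z \<in> Rplus \<mu>} \<in> sets (borel \<Otimes>\<^sub>M borel :: (real \<times> real) measure)"
    by (simp add: vimage_def space_pair_measure)
  then show ?thesis
    unfolding sets_\<nu> borel_prod .
qed

lemma phi_Rplus_mass:
  fixes \<mu> \<sigma> g :: "real \<Rightarrow> real" and \<nu> :: "(real \<times> real) measure"
  assumes "stationary_chain \<nu> (density lborel (\<lambda>x. ennreal (g x))) (phi_step \<mu> \<sigma>)"
    and sets_\<nu>: "sets \<nu> = sets borel"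
    and [measurable]: "\<mu> \<in> borel_measurable borel" "g \<in> borel_measurable borel"
    and g_pos: "\<And>x. 0 < g x" and sigma_pos: "\<And>y. 0 < \<sigma> y"
    and RC_plus: "0 < emeasure lborel (Rplus \<mu>)"
  shows "0 < emeasure \<nu> {z. snd z \<in> Rplus \<mu>}"
proof -
  interpret stationary_chain \<nu> "density lborel (\<lambda>x. ennreal (g x))" "phi_step \<mu> \<sigma>" by fact
  show ?thesis
  proof (rule emeasure_pos_if_reachable[OF Rplus_snd_measurable[OF sets_\<nu>]])
    fix z
    show "0 < emeasure (density lborel (\<lambda>x. ennreal (g x)))
        {e \<in> space (density lborel (\<lambda>x. ennreal (g x))). phi_step \<mu> \<sigma> (z, e) \<in> {z. snd z \<in> Rplus \<mu>}}"
      using emeasure_density_affine_preimage_pos[OF _ g_pos _ RC_plus, where s="\<sigma> (snd z)" and t="snd z + \<mu> (snd z)"]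
        sigma_pos[of "snd z"] by simp
  qed simp
qed

lemma integral_pos_of_pos_on:
  fixes f :: "'a \<Rightarrow> real"
  assumes f_int: "integrable M f" and nonneg: "\<And>x. x \<in> space M \<Longrightarrow> 0 \<le> f x"
    and A: "A \<in> sets M" "0 < emeasure M A" and pos: "\<And>x. x \<in> A \<Longrightarrow> 0 < f x"
  shows "0 < integral\<^sup>L M f"
proof -
  have "integral\<^sup>L M f \<noteq> 0"
  proof
    assume "integral\<^sup>L M f = 0"
    then have "AE x in M. f x = 0"
      using integral_nonneg_eq_0_iff_AE[OF f_int] nonneg by simp
    then have "AE x in M. x \<notin> A"
      by (rule AE_mp) (rule AE_I2, auto dest: pos)
    then have "emeasure M A = 0"
      using AE_iff_measurable[OF A(1), of "\<lambda>x. x \<notin> A"] sets.sets_into_space[OF A(1)] by auto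
    with A(2) show False by simp
  qed
  moreover have "0 \<le> integral\<^sup>L M f"
    using nonneg by (intro integral_nonneg_AE AE_I2)
  ultimately show ?thesis by simp
qed

lemma phi_drift_gain_pos:
  fixes \<mu> \<sigma> g :: "real \<Rightarrow> real" and \<nu> :: "(real \<times> real) measure"
  assumes chain: "stationary_chain \<nu> (density lborel (\<lambda>x. ennreal (g x))) (phi_step \<mu> \<sigma>)"
    and sets_\<nu>: "sets \<nu> = sets borel"
    and mu_meas[measurable]: "\<mu> \<in> borel_measurable borel" and g_meas: "g \<in> borel_measurable borel"
    and g_pos: "\<And>x. 0 < g x" and sigma_pos: "\<And>y. 0 < \<sigma> y"
    and RC_plus: "0 < emeasure lborel (Rplus \<mu>)"
    and mu_int: "integrable \<nu> (\<lambda>z. \<mu> (snd z))"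
  shows "0 < (\<integral>z. indicator (Rplus \<mu>) (snd z) * \<mu> (snd z) \<partial>\<nu>)"
proof (rule integral_pos_of_pos_on[OF _ _ Rplus_snd_measurable[OF sets_\<nu> mu_meas]
      phi_Rplus_mass[OF chain sets_\<nu> mu_meas g_meas g_pos sigma_pos RC_plus]])
  show "integrable \<nu> (\<lambda>z. indicator (Rplus \<mu>) (snd z) * \<mu> (snd z))"
  proof (rule Bochner_Integration.integrable_bound[OF mu_int])
    show "(\<lambda>z. indicator (Rplus \<mu>) (snd z) * \<mu> (snd z)) \<in> borel_measurable \<nu>"
      unfolding measurable_borel_plane[OF sets_\<nu>] by measurable
  qed (auto simp: indicator_def)
qed (auto simp: indicator_def Rplus_def)

theorem lemmal2p14:
  fixes \<mu> \<sigma> g :: "real \<Rightarrow> real" and E :: "real measure" and \<nu> :: "(real \<times> real) measure"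
  assumes mu_meas: "\<mu> \<in> borel_measurable borel"
    and sigma_meas: "\<sigma> \<in> borel_measurable borel"
    and A1_prob: "prob_space E"
    and A1_dens: "E = density lborel (\<lambda>x. ennreal (g x))"
    and A1_g_meas: "g \<in> borel_measurable borel"
    and A1_g_nonneg: "\<And>x. g x \<ge> 0"
    and A1_g_bounds: "\<And>K. compact K \<Longrightarrow> \<exists>c C. 0 < c \<and> (\<forall>x\<in>K. c \<le> g x \<and> g x \<le> C)"
    and A2_mu: "\<And>K. compact K \<Longrightarrow> bounded (\<mu> ` K)"
    and A2_sigma_pos: "\<And>x. \<sigma> x > 0"
    and A2_sigma_low: "\<And>K. compact K \<Longrightarrow> \<exists>c>0. \<forall>x\<in>K. \<sigma> x \<ge> c"
    and A2_sigma_bdd: "bounded (range \<sigma>)"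
    and A3: "Limsup at_infinity (\<lambda>x::real. ereal (\<bar>x + \<mu> x\<bar> / \<bar>x\<bar>)) < 1"
    and A4_exp: "\<exists>\<kappa>>0. (\<integral>\<^sup>+ e. ennreal (exp (\<kappa> * e\<^sup>2)) \<partial>E) < \<infinity>"
    and A4_mean: "(\<integral> e. e \<partial>E) = 0"
    and RC_plus: "emeasure lborel (Rplus \<mu>) > 0"
    and inv: "phi_invariant \<mu> \<sigma> E \<nu>"
  shows "integrable \<nu> (fRC \<mu>) \<and> (\<integral> z. fRC \<mu> z \<partial>\<nu>) > 0"
proof -
  have sets_E: "sets E = sets borel" and sets_\<nu>: "sets \<nu> = sets borel"
    using A1_dens inv by (simp_all add: phi_invariant_def)
  have g_pos: "0 < g x" for x
    using A1_g_bounds[of "{x}"] by auto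
  obtain \<rho> C where \<rho>: "0 \<le> \<rho>" "\<rho> < 1" and C: "0 \<le> C" and growth: "\<And>y. \<bar>y + \<mu> y\<bar> \<le> \<rho> * \<bar>y\<bar> + C"
    using linear_growth_of_contracting_drift[OF A2_mu A3] by blast
  obtain S where sigma_bdd: "\<And>y. \<bar>\<sigma> y\<bar> \<le> S"
    using A2_sigma_bdd unfolding bounded_iff by auto
  have noise_int: "integrable E (\<lambda>e. e)"
    using A4_exp integrable_of_exp_square_moment[OF prob_space.finite_measure[OF A1_prob] sets_E] by blast
  have chain: "stationary_chain \<nu> E (phi_step \<mu> \<sigma>)"
    by (rule phi_invariant_stationary_chain[OF mu_meas sigma_meas A1_prob sets_E inv])
  have mu_int: "integrable \<nu> (\<lambda>z. \<mu> (snd z))"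
    by (rule phi_integrable_drift[OF chain sets_\<nu> mu_meas \<rho> C growth noise_int sigma_bdd])
  note fRC = phi_integral_fRC[OF chain sets_\<nu> sets_E mu_meas sigma_meas mu_int noise_int A4_mean sigma_bdd]
  have "0 < (\<integral>z. indicator (Rplus \<mu>) (snd z) * \<mu> (snd z) \<partial>\<nu>)"
    using phi_drift_gain_pos[OF chain[unfolded A1_dens] sets_\<nu> mu_meas A1_g_meas g_pos A2_sigma_pos
        RC_plus mu_int] .
  with fRC show ?thesis by simp
qed

end
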